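(* Let $W\subseteq\mathbb{R}^n$ be a linear subspace of dimension $d<n$. If $A\subseteq\mathbb{R}$ is countable, then the set $\mathcal{A} := \bigl\{(y_1,\dotsc,y_n)\in\mathbb{R}^n:\sum_{i=1}^n\mathbb{1}_{\{y_i - w_i\in A\}}\ge d+1\text{ for some }(w_1,\dotsc,w_n)\in W\bigr\}$ has Lebesgue measure $0$. *)

theory Defs
  imports "HOL-Analysis.Analysis"
begin

end

theory Submission
  imports Defs
begin

(* If y - w has d + 1 coordinates in A for some w in W, pick such a set S of coordinates and
   the values a in A taken there. Then y lies in the translate, by the vector with S-coordinates a,
   of the span of W and the coordinate axes outside S. That span has dimension at most
   d + (n - (d + 1)) < n, so each such flat is negligible, and there are only countably many
   choices of S and a. *)

lemma dim_Un_le_card: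
  fixes A B :: "'a::euclidean_space set"
  assumes "finite B"
  shows "dim (A \<union> B) \<le> dim A + card B"
  using assms
proof (induction B rule: finite_induct)
  case (insert x B)
  have "dim (A \<union> insert x B) \<le> dim (A \<union> B) + 1"
    using dim_insert[of x "A \<union> B"] by simp
  with insert show ?case by simp
qed simp

lemma span_axis_if_support:
  fixes z :: "real ^ 'n"
  assumes "\<And>i. i \<notin> T \<Longrightarrow> z $ i = 0"
  shows "z \<in> span ((\<lambda>i. axis i 1) ` T)"
proof -
  have "z = (\<Sum>i\<in>T. z $ i *\<^sub>R axis i 1)"
    using basis_expansion[of z] assms
    by (simp add: scalar_mult_eq_scaleR sum.mono_neutral_right[of UNIV T])
  also have "\<dots> \<in> span ((\<lambda>i. axis i 1) ` T)"
    by (intro span_sum span_mul span_base) auto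
  finally show ?thesis .
qed

definition pinned_flat :: "(real ^ 'n) set \<Rightarrow> 'n set \<Rightarrow> ('n \<Rightarrow> real) \<Rightarrow> (real ^ 'n) set"
  where "pinned_flat W S a =
    (+) (\<chi> i. if i \<in> S then a i else 0) ` span (W \<union> (\<lambda>i. axis i 1) ` (- S))"

lemma mem_pinned_flat:
  fixes y w :: "real ^ 'n"
  assumes "w \<in> W" and "\<And>i. i \<in> S \<Longrightarrow> a i = y $ i - w $ i"
  shows "y \<in> pinned_flat W S a"
proof -
  define c :: "real ^ 'n" where "c = (\<chi> i. if i \<in> S then a i else 0)"
  let ?U = "W \<union> (\<lambda>i. axis i 1) ` (- S)"
  have "y - w - c \<in> span ((\<lambda>i. axis i 1) ` (- S))"
    by (rule span_axis_if_support) (simp add: c_def assms(2))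
  then have "y - w - c \<in> span ?U"
    by (meson span_mono sup_ge2 subsetD)
  moreover have "w \<in> span ?U"
    using assms(1) by (simp add: span_base)
  ultimately have "y - c \<in> span ?U"
    using span_add by fastforce
  then show ?thesis
    unfolding pinned_flat_def c_def[symmetric] by (rule image_eqI[rotated]) simp
qed

lemma negligible_pinned_flat:
  fixes W :: "(real ^ 'n) set"
  assumes "dim W < card S"
  shows "negligible (pinned_flat W S a)"
proof -
  have "card ((\<lambda>i. axis i (1::real)) ` (- S)) \<le> CARD('n) - card S"
    using card_image_le[of "- S"] by (simp add: Compl_eq_Diff_UNIV card_Diff_subset)
  moreover have "card S \<le> CARD('n)"
    by (simp add: card_mono)
  ultimately have "dim (span (W \<union> (\<lambda>i. axis i 1) ` (- S))) < DIM(real ^ 'n)"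
    using dim_Un_le_card[of "(\<lambda>i. axis i (1::real)) ` (- S)" W] assms by simp
  then show ?thesis
    unfolding pinned_flat_def by (intro negligible_translation negligible_lowdim)
qed

theorem lemma6p30:
  fixes W :: "(real ^ 'n) set" and A :: "real set" and d :: nat
  assumes "subspace W" and "dim W = d" and "d < CARD('n)"
    and "countable A"
  shows "{y :: real ^ 'n. \<exists>w\<in>W. card {i. y $ i - w $ i \<in> A} \<ge> d + 1}
           \<in> null_sets lebesgue"
proof -
  define I where "I = Sigma {S :: 'n set. card S = d + 1} (\<lambda>S. S \<rightarrow>\<^sub>E A)"
  have "countable I"
    unfolding I_def using assms(4) by (intro countable_SIGMA countable_PiE) auto
  then have "negligible (\<Union>(S, a)\<in>I. pinned_flat W S a)"
    using assms(2) by (intro negligible_countable_Union) (auto simp: I_def negligible_pinned_flat)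
  moreover have "{y. \<exists>w\<in>W. card {i. y $ i - w $ i \<in> A} \<ge> d + 1} \<subseteq> (\<Union>(S, a)\<in>I. pinned_flat W S a)"
  proof safe
    fix y w
    assume "w \<in> W" and "d + 1 \<le> card {i. y $ i - w $ i \<in> A}"
    then obtain S where S: "S \<subseteq> {i. y $ i - w $ i \<in> A}" "card S = d + 1"
      by (meson obtain_subset_with_card_n)
    let ?a = "restrict (\<lambda>i. y $ i - w $ i) S"
    have "(S, ?a) \<in> I" and "y \<in> pinned_flat W S ?a"
      using S \<open>w \<in> W\<close> by (auto simp: I_def intro: mem_pinned_flat)
    then show "y \<in> (\<Union>(S, a)\<in>I. pinned_flat W S a)" by blast
  qed
  ultimately show ?thesis
    using negligible_subset negligible_iff_null_sets by blast
qed

end
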